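(* Let $w=e_{a_1}\cdots e_{a_N}$ with $a_1,\dots,a_N\in\{0,1\}$, $N\ge0$, and put $\overleftarrow{w}=e_{a_N}\cdots e_{a_1}$. Then in $\mathfrak H[[s,t]]$, \begin{align*} &\sum_{v=0}^{N}(-1)^v\,(1+e_0t)^{-1}e_1e_{a_1}\cdots e_{a_v}\ ш\ (1-e_0s)^{-1}e_1e_{a_N}\cdots e_{a_{v+1}}\\ &=(1+e_0t)^{-1}\ ш\ \bigl((1-e_0s)^{-1}e_1\overleftarrow{w}e_1(1-e_0t)^{-1}\bigr)+(-1)^N(1-e_0s)^{-1}\ ш\ \bigl((1+e_0t)^{-1}e_1we_1(1+e_0s)^{-1}\bigr). \end{align*}
   Context: $\mathfrak H=\mathbb Q\langle e_0,e_1\rangle$ (noncommutative polynomials); $s,t$ commuting indeterminates; $(1\pm e_0t)^{-1}=\sum_{m\ge0}(\mp t)^me_0^m$ etc. in $\mathfrak H[[s,t]]$. The shuffle product $ш$ on $\mathfrak H$ is the $\mathbb Q$-bilinear product with $1ш w=wш1=w$ and $we_iш w'e_j=(we_iш w')e_j+(wш w'e_j)e_i$ ($w,w'\in\mathfrak H$, $i,j\in\{0,1\}$), extended bilinearly and coefficientwise to $\mathfrak H[[s,t]]$. For $v=N$ the word $e_{a_N}\cdots e_{a_{v+1}}$ is empty, and for $v=0$ the word $e_{a_1}\cdots e_{a_v}$ is empty. *)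

theory Defs
  imports Complex_Main
begin

text \<open>Words in the letters e_0, e_1 are lists of naturals (letter i stands for e_i).
  Elements of Q<e0,e1> are represented by their coefficient functions word => rat.
  Elements of H[[s,t]] are represented by coefficient functions
  F :: nat => nat => (word => rat), where F m n is the coefficient of s^m t^n.\<close>

type_synonym word = "nat list"
type_synonym hpol = "word \<Rightarrow> rat"
type_synonym hser = "nat \<Rightarrow> nat \<Rightarrow> hpol"

definition wd :: "word \<Rightarrow> hpol" where
  "wd u = (\<lambda>x. if x = u then 1 else 0)"

text \<open>Shuffle of words, by the recursion on last letters
  (u e_i) sh (v e_j) = ((u e_i) sh v) e_j + (u sh (v e_j)) e_i,
  written here on reversed words (head = last letter).\<close>
fun shr :: "word \<Rightarrow> word \<Rightarrow> hpol" where
  "shr [] v = wd v"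
| "shr (i # u) [] = wd (i # u)"
| "shr (i # u) (j # v) =
     (\<lambda>w. case w of [] \<Rightarrow> 0
        | c # w' \<Rightarrow> (if c = j then shr (i # u) v w' else 0)
                  + (if c = i then shr u (j # v) w' else 0))"

definition shw :: "word \<Rightarrow> word \<Rightarrow> hpol" where
  "shw u v = (\<lambda>w. shr (rev u) (rev v) (rev w))"

text \<open>Bilinear extension of shuffle (only subwords of w can contribute to the
  coefficient of w, so the sum is finite).\<close>
definition shH :: "hpol \<Rightarrow> hpol \<Rightarrow> hpol" where
  "shH f g = (\<lambda>w. \<Sum>u\<in>set (subseqs w). \<Sum>v\<in>set (subseqs w). f u * g v * shw u v w)"

definition mulH :: "hpol \<Rightarrow> hpol \<Rightarrow> hpol" where
  "mulH f g = (\<lambda>w. \<Sum>i\<le>length w. f (take i w) * g (drop i w))"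

definition mulS :: "hser \<Rightarrow> hser \<Rightarrow> hser" where
  "mulS F G = (\<lambda>m n w. \<Sum>i\<le>m. \<Sum>j\<le>n. mulH (F i j) (G (m - i) (n - j)) w)"

definition shS :: "hser \<Rightarrow> hser \<Rightarrow> hser" where
  "shS F G = (\<lambda>m n w. \<Sum>i\<le>m. \<Sum>j\<le>n. shH (F i j) (G (m - i) (n - j)) w)"

definition cstS :: "hpol \<Rightarrow> hser" where
  "cstS f = (\<lambda>m n. if m = 0 \<and> n = 0 then f else (\<lambda>_. 0))"

text \<open>(1 - c e_0 s)^{-1} = sum_m c^m s^m e_0^m  and  (1 - c e_0 t)^{-1} = sum_n c^n t^n e_0^n.\<close>
definition geoS :: "rat \<Rightarrow> hser" where
  "geoS c = (\<lambda>m n w. if n = 0 \<and> w = replicate m 0 then c ^ m else 0)"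

definition geoT :: "rat \<Rightarrow> hser" where
  "geoT c = (\<lambda>m n w. if m = 0 \<and> w = replicate n 0 then c ^ n else 0)"

end

theory Submission
  imports Defs "HOL-Library.Sublist"
begin

text \<open>For a letter \<open>c\<close> let \<open>\<partial>\<^sub>c\<close> map a series to its coefficients at the words ending in
  \<open>e\<^sub>c\<close>, with that last letter removed. It is a derivation of the shuffle product, and a series is
  determined by its coefficient at the empty word together with all \<open>\<partial>\<^sub>c\<close> of it. Both sides vanish
  at the empty word. Writing the \<open>v\<close>-th summand on the left as the shuffle of \<open>P\<^sub>v\<close> and \<open>Q\<^sub>v\<close>,
  the shuffle of \<open>\<partial>\<^sub>c P\<^sub>v\<^sub>+\<^sub>1\<close> and \<open>Q\<^sub>v\<^sub>+\<^sub>1\<close> equals that of \<open>P\<^sub>v\<close> and \<open>\<partial>\<^sub>c Q\<^sub>v\<close>, so the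
  derivative of the alternating sum telescopes to two boundary terms, which are nonzero only for
  \<open>c = 1\<close>. On the right, \<open>\<partial>\<^sub>0\<close> multiplies \<open>(1 + e\<^sub>0t)\<^sup>-\<^sup>1\<close> by \<open>-t\<close> and \<open>X e\<^sub>1 (1 - e\<^sub>0t)\<^sup>-\<^sup>1\<close>
  by \<open>t\<close>, so the two contributions cancel, while \<open>\<partial>\<^sub>1\<close> strips the final \<open>e\<^sub>1\<close> and produces the
  same boundary terms.\<close>

section \<open>Shuffle of words\<close>

lemma shr_Nil_right: "shr u [] = wd u"
  by (cases u) auto

lemma shr_Nil_word: "shr u v [] = (if u = [] \<and> v = [] then 1 else 0)"
  by (cases u; cases v) (auto simp: wd_def)

lemma shr_Cons_word: "shr u v (c # w) =
   (case u of [] \<Rightarrow> 0 | i # u' \<Rightarrow> if i = c then shr u' v w else 0) +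
   (case v of [] \<Rightarrow> 0 | j # v' \<Rightarrow> if j = c then shr u v' w else 0)"
  by (cases u; cases v) (auto simp: wd_def shr_Nil_right)

lemma shr_commute: "shr u v w = shr v u w"
proof (induction w arbitrary: u v)
  case Nil
  then show ?case by (simp add: shr_Nil_word conj_commute)
next
  case (Cons c w)
  then show ?case
    unfolding shr_Cons_word by (cases u; cases v) (auto simp: shr_Nil_right)
qed

lemma shw_commute: "shw u v w = shw v u w"
  by (simp add: shw_def shr_commute)

lemma shw_Nil: "shw u v [] = (if u = [] \<and> v = [] then 1 else 0)"
  by (simp add: shw_def shr_Nil_word)

lemma shw_snoc: "shw u v (w @ [c]) =
   (if u \<noteq> [] \<and> last u = c then shw (butlast u) v w else 0) +
   (if v \<noteq> [] \<and> last v = c then shw u (butlast v) w else 0)"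
  unfolding shw_def rev_append shr_Cons_word
  by (cases u rule: rev_cases; cases v rule: rev_cases) (auto simp: shw_def wd_def shr_Nil_right)

lemma shw_nonzero_subseq:
  assumes "shw u v w \<noteq> 0"
  shows "subseq u w \<and> subseq v w"
  using assms
proof (induction w arbitrary: u v rule: rev_induct)
  case Nil
  then show ?case by (auto simp: shw_Nil split: if_splits)
next
  case (snoc c w)
  have "(u \<noteq> [] \<and> last u = c \<and> shw (butlast u) v w \<noteq> 0) \<or>
        (v \<noteq> [] \<and> last v = c \<and> shw u (butlast v) w \<noteq> 0)"
    using snoc.prems unfolding shw_snoc
    by (cases "u \<noteq> [] \<and> last u = c"; cases "v \<noteq> [] \<and> last v = c") auto
  then consider
      u' where "u = u' @ [c]" "shw u' v w \<noteq> 0"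
    | v' where "v = v' @ [c]" "shw u v' w \<noteq> 0"
    by (metis append_butlast_last_id)
  then show ?case
  proof cases
    case (1 u')
    with snoc.IH[of u' v] show ?thesis by auto
  next
    case (2 v')
    with snoc.IH[of u v'] show ?thesis by auto
  qed
qed

lemma shH_eq_sum_over:
  assumes "finite U" "finite V" and supp: "\<And>u v. shw u v w \<noteq> 0 \<Longrightarrow> u \<in> U \<and> v \<in> V"
  shows "shH f g w = (\<Sum>u\<in>U. \<Sum>v\<in>V. f u * g v * shw u v w)"
proof -
  let ?S = "set (subseqs w)" and ?h = "\<lambda>(u, v). f u * g v * shw u v w"
  have "shH f g w = sum ?h (?S \<times> ?S)"
    unfolding shH_def sum.cartesian_product ..
  also have "\<dots> = sum ?h ((?S \<times> ?S) \<inter> (U \<times> V))"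
    by (rule sum.mono_neutral_right) (auto dest: supp)
  also have "\<dots> = sum ?h (U \<times> V)"
    by (rule sum.mono_neutral_left) (use assms shw_nonzero_subseq in auto)
  finally show ?thesis
    unfolding sum.cartesian_product .
qed

lemma sum_subseqs_snoc:
  "(\<Sum>u\<in>set (subseqs (w @ [c])). if u \<noteq> [] \<and> last u = c then h u else 0) =
   (\<Sum>x\<in>set (subseqs w). h (x @ [c]))"
proof -
  have "{u \<in> set (subseqs (w @ [c])). u \<noteq> [] \<and> last u = c} = (\<lambda>x. x @ [c]) ` set (subseqs w)"
  proof (intro equalityI subsetI)
    fix u
    assume u: "u \<in> {u \<in> set (subseqs (w @ [c])). u \<noteq> [] \<and> last u = c}"
    then obtain x where "u = x @ [c]"
      by (metis (mono_tags, lifting) append_butlast_last_id mem_Collect_eq)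
    with u show "u \<in> (\<lambda>x. x @ [c]) ` set (subseqs w)"
      by auto
  qed auto
  then show ?thesis
    by (simp add: sum.inter_filter[symmetric] sum.reindex inj_on_def)
qed

lemma shH_commute: "shH f g w = shH g f w"
  unfolding shH_def by (subst sum.swap) (simp add: shw_commute mult_ac)

lemma shH_Nil: "shH f g [] = f [] * g []"
  by (simp add: shH_def shw_Nil)

lemma sum_shw_snoc_left:
  fixes f g :: hpol and w :: word and c :: nat
  defines "T \<equiv> set (subseqs (w @ [c]))"
  shows "(\<Sum>u\<in>T. \<Sum>v\<in>T. f u * g v * (if u \<noteq> [] \<and> last u = c then shw (butlast u) v w else 0))
       = shH (\<lambda>u. f (u @ [c])) g w"
proof -
  have "(\<Sum>u\<in>T. \<Sum>v\<in>T. f u * g v * (if u \<noteq> [] \<and> last u = c then shw (butlast u) v w else 0))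
      = (\<Sum>u\<in>T. if u \<noteq> [] \<and> last u = c then \<Sum>v\<in>T. f u * g v * shw (butlast u) v w else 0)"
    by (rule sum.cong) auto
  also have "\<dots> = (\<Sum>x\<in>set (subseqs w). \<Sum>v\<in>T. f (x @ [c]) * g v * shw x v w)"
    unfolding T_def by (subst sum_subseqs_snoc) simp
  also have "\<dots> = shH (\<lambda>u. f (u @ [c])) g w"
    by (rule shH_eq_sum_over[symmetric]) (auto simp: T_def dest: shw_nonzero_subseq)
  finally show ?thesis .
qed

lemma shH_snoc: "shH f g (w @ [c]) = shH (\<lambda>u. f (u @ [c])) g w + shH f (\<lambda>v. g (v @ [c])) w"
proof -
  let ?T = "set (subseqs (w @ [c]))"
  have split: "shH f g (w @ [c]) =
      (\<Sum>u\<in>?T. \<Sum>v\<in>?T. f u * g v * (if u \<noteq> [] \<and> last u = c then shw (butlast u) v w else 0)) +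
      (\<Sum>u\<in>?T. \<Sum>v\<in>?T. f u * g v * (if v \<noteq> [] \<and> last v = c then shw u (butlast v) w else 0))"
    unfolding shH_def shw_snoc by (simp add: distrib_left sum.distrib)
  have swap: "(\<Sum>u\<in>?T. \<Sum>v\<in>?T. f u * g v * (if v \<noteq> [] \<and> last v = c then shw u (butlast v) w else 0))
      = (\<Sum>v\<in>?T. \<Sum>u\<in>?T. g v * f u * (if v \<noteq> [] \<and> last v = c then shw (butlast v) u w else 0))"
    by (subst sum.swap) (intro sum.cong refl, simp add: shw_commute[of _ "butlast _"])
  show ?thesis
    unfolding split swap sum_shw_snoc_left shH_commute[of "\<lambda>v. g (v @ [c])"] ..
qed

section \<open>Shuffle of series and the right derivation\<close>

definition right_deriv :: "nat \<Rightarrow> hser \<Rightarrow> hser" where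
  "right_deriv c F = (\<lambda>m n w. F m n (w @ [c]))"

definition mult_t :: "rat \<Rightarrow> hser \<Rightarrow> hser" where
  "mult_t k F = (\<lambda>m n w. if n = 0 then 0 else k * F m (n - 1) w)"

definition mult_s :: "rat \<Rightarrow> hser \<Rightarrow> hser" where
  "mult_s k F = (\<lambda>m n w. if m = 0 then 0 else k * F (m - 1) n w)"

definition zeroS :: hser where
  "zeroS = (\<lambda>_ _ _. 0)"

lemma shS_snoc:
  "shS F G m n (w @ [c]) = shS (right_deriv c F) G m n w + shS F (right_deriv c G) m n w"
  unfolding shS_def right_deriv_def by (simp add: shH_snoc sum.distrib)

lemma shS_Nil: "shS F G m n [] = (\<Sum>i\<le>m. \<Sum>j\<le>n. F i j [] * G (m - i) (n - j) [])"
  unfolding shS_def by (simp add: shH_Nil)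

lemma shS_commute: "shS F G = shS G F"
proof (intro ext)
  fix m n w
  have reflect: "(\<Sum>i\<le>k. h i) = (\<Sum>i\<le>k. h (k - i))" for k and h :: "nat \<Rightarrow> rat"
    using sum.atLeastAtMost_rev[of h 0 k] by (simp add: atLeast0AtMost)
  have "shS F G m n w = (\<Sum>i\<le>m. \<Sum>j\<le>n. shH (F (m - i) (n - j)) (G i j) w)"
    unfolding shS_def by (subst reflect, rule sum.cong[OF refl], subst reflect) simp
  also have "\<dots> = shS G F m n w"
    unfolding shS_def by (simp add: shH_commute)
  finally show "shS F G m n w = shS G F m n w" .
qed

lemma zeroS_apply [simp]: "zeroS m n w = 0"
  by (simp add: zeroS_def)

lemma shS_zeroS_left [simp]: "shS zeroS G = zeroS"
  by (simp add: shS_def zeroS_def shH_def)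

lemma shS_zeroS_right [simp]: "shS F zeroS = zeroS"
  by (simp add: shS_def zeroS_def shH_def)

lemma shH_scale_left: "shH (\<lambda>u. k * f u) g w = k * shH f g w"
  by (simp add: shH_def sum_distrib_left mult_ac)

lemma shS_mult_t_left: "shS (mult_t k F) G = mult_t k (shS F G)"
proof (intro ext)
  fix m n w
  show "shS (mult_t k F) G m n w = mult_t k (shS F G) m n w"
  proof (cases n)
    case 0
    then show ?thesis by (simp add: shS_def mult_t_def shH_def)
  next
    case (Suc n')
    have "shS (mult_t k F) G m n w = (\<Sum>i\<le>m. \<Sum>j\<le>n'. shH (\<lambda>x. k * F i j x) (G (m - i) (n' - j)) w)"
      unfolding shS_def mult_t_def Suc
      by (rule sum.cong[OF refl]) (simp add: sum.atMost_Suc_shift shH_def del: sum.atMost_Suc)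
    also have "\<dots> = mult_t k (shS F G) m n w"
      unfolding shS_def mult_t_def Suc by (simp add: shH_scale_left sum_distrib_left)
    finally show ?thesis .
  qed
qed

lemma shS_mult_s_left: "shS (mult_s k F) G = mult_s k (shS F G)"
proof (intro ext)
  fix m n w
  show "shS (mult_s k F) G m n w = mult_s k (shS F G) m n w"
  proof (cases m)
    case 0
    then show ?thesis by (simp add: shS_def mult_s_def shH_def)
  next
    case (Suc m')
    have "shS (mult_s k F) G m n w = (\<Sum>i\<le>m'. \<Sum>j\<le>n. shH (\<lambda>x. k * F i j x) (G (m' - i) (n - j)) w)"
      unfolding shS_def mult_s_def Suc
      by (simp add: sum.atMost_Suc_shift shH_def del: sum.atMost_Suc)
    also have "\<dots> = mult_s k (shS F G) m n w"
      unfolding shS_def mult_s_def Suc by (simp add: shH_scale_left sum_distrib_left)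
    finally show ?thesis .
  qed
qed

lemma shS_mult_t_right: "shS F (mult_t k G) = mult_t k (shS F G)"
  by (metis shS_commute shS_mult_t_left)

lemma shS_mult_s_right: "shS F (mult_s k G) = mult_s k (shS F G)"
  by (metis shS_commute shS_mult_s_left)

section \<open>Geometric series times a word\<close>

lemma mulH_point_right:
  "mulH f (\<lambda>x. if x = u then k else 0) w =
     (if suffix u w then f (take (length w - length u) w) * k else 0)"
proof -
  have "mulH f (\<lambda>x. if x = u then k else 0) w =
      (\<Sum>i\<le>length w. if i = length w - length u
         then (if suffix u w then f (take i w) * k else 0) else 0)"
    unfolding mulH_def
    by (intro sum.cong refl) (auto simp: suffix_def, metis append_take_drop_id diff_diff_cancel length_drop)
  then show ?thesis by simp
qed

lemma suffix_take_eq_iff: "suffix u w \<and> take (length w - length u) w = p \<longleftrightarrow> w = p @ u"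
  by (auto simp: suffix_def)

lemma mulH_zero_left [simp]: "mulH (\<lambda>_. 0) g w = 0"
  by (simp add: mulH_def)

lemma mulH_zero_right [simp]: "mulH f (\<lambda>_. 0) w = 0"
  by (simp add: mulH_def)

lemma mulS_cstS: "mulS F (cstS g) m n w = mulH (F m n) g w"
proof -
  have "mulS F (cstS g) m n w = (\<Sum>i\<le>m. if i = m then mulH (F m n) g w else 0)"
    unfolding mulS_def cstS_def
    by (intro sum.cong refl) (auto simp: if_distrib[of "\<lambda>h. mulH _ h w"] cong: if_cong)
  then show ?thesis by simp
qed

lemma mulS_geoT: "mulS F (geoT d) m n w =
   (\<Sum>j\<le>n. mulH (F m j) (\<lambda>x. if x = replicate (n - j) 0 then d ^ (n - j) else 0) w)"
proof -
  have "mulS F (geoT d) m n w = (\<Sum>i\<le>m. if i = m then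
      (\<Sum>j\<le>n. mulH (F m j) (\<lambda>x. if x = replicate (n - j) 0 then d ^ (n - j) else 0) w) else 0)"
    unfolding mulS_def geoT_def by (rule sum.cong[OF refl]) auto
  then show ?thesis by simp
qed

lemma mulS_geoS: "mulS F (geoS d) m n w =
   (\<Sum>i\<le>m. mulH (F i n) (\<lambda>x. if x = replicate (m - i) 0 then d ^ (m - i) else 0) w)"
proof -
  have "mulS F (geoS d) m n w = (\<Sum>i\<le>m. \<Sum>j\<le>n. if j = n then
      mulH (F i n) (\<lambda>x. if x = replicate (m - i) 0 then d ^ (m - i) else 0) w else 0)"
    unfolding mulS_def geoS_def by (intro sum.cong refl) auto
  then show ?thesis by simp
qed

lemma geoT_mulS_wd: "mulS (geoT c) (cstS (wd u)) m n w =
   (if m = 0 \<and> w = replicate n 0 @ u then c ^ n else 0)"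
  unfolding mulS_cstS wd_def mulH_point_right geoT_def
  using suffix_take_eq_iff[of u w "replicate n 0"] by auto

lemma geoS_mulS_wd: "mulS (geoS c) (cstS (wd u)) m n w =
   (if n = 0 \<and> w = replicate m 0 @ u then c ^ m else 0)"
  unfolding mulS_cstS wd_def mulH_point_right geoS_def
  using suffix_take_eq_iff[of u w "replicate m 0"] by auto

lemma geoS_mulS_wd_mulS_geoT: "mulS (mulS (geoS c) (cstS (wd u))) (geoT d) m n w =
   (if w = replicate m 0 @ u @ replicate n 0 then c ^ m * d ^ n else 0)"
proof -
  have "mulS (mulS (geoS c) (cstS (wd u))) (geoT d) m n w =
      (\<Sum>j\<le>n. if j = 0 then mulH (\<lambda>x. if x = replicate m 0 @ u then c ^ m else 0)
         (\<lambda>x. if x = replicate n 0 then d ^ n else 0) w else 0)"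
    unfolding mulS_geoT geoS_mulS_wd by (intro sum.cong refl) (auto cong: if_cong)
  also have "\<dots> = (if w = replicate m 0 @ u @ replicate n 0 then c ^ m * d ^ n else 0)"
    unfolding mulH_point_right
    using suffix_take_eq_iff[of "replicate n 0" w "replicate m 0 @ u"] by auto
  finally show ?thesis .
qed

lemma geoT_mulS_wd_mulS_geoS: "mulS (mulS (geoT c) (cstS (wd u))) (geoS d) m n w =
   (if w = replicate n 0 @ u @ replicate m 0 then c ^ n * d ^ m else 0)"
proof -
  have "mulS (mulS (geoT c) (cstS (wd u))) (geoS d) m n w =
      (\<Sum>i\<le>m. if i = 0 then mulH (\<lambda>x. if x = replicate n 0 @ u then c ^ n else 0)
         (\<lambda>x. if x = replicate m 0 then d ^ m else 0) w else 0)"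
    unfolding mulS_geoS geoT_mulS_wd by (intro sum.cong refl) (auto cong: if_cong)
  also have "\<dots> = (if w = replicate n 0 @ u @ replicate m 0 then c ^ n * d ^ m else 0)"
    unfolding mulH_point_right
    using suffix_take_eq_iff[of "replicate m 0" w "replicate n 0 @ u"] by auto
  finally show ?thesis .
qed

lemma snoc_eq_append_replicate_Suc:
  "w @ [x] = p @ replicate (Suc k) y \<longleftrightarrow> x = y \<and> w = p @ replicate k y"
  by (simp only: replicate_Suc replicate_append_same[symmetric] append_assoc[symmetric] append1_eq_conv)
     blast

lemma right_deriv_geoT: "right_deriv x (geoT k) = (if x = 0 then mult_t k (geoT k) else zeroS)"
proof -
  have "geoT k m n (w @ [x]) = (if x = 0 then mult_t k (geoT k) m n w else 0)" for m n w
    using snoc_eq_append_replicate_Suc[of w x "[]" "n - 1" 0]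
    by (cases n) (auto simp: geoT_def mult_t_def)
  then show ?thesis by (auto simp: right_deriv_def zeroS_def)
qed

lemma right_deriv_geoS: "right_deriv x (geoS k) = (if x = 0 then mult_s k (geoS k) else zeroS)"
proof -
  have "geoS k m n (w @ [x]) = (if x = 0 then mult_s k (geoS k) m n w else 0)" for m n w
    using snoc_eq_append_replicate_Suc[of w x "[]" "m - 1" 0]
    by (cases m) (auto simp: geoS_def mult_s_def)
  then show ?thesis by (auto simp: right_deriv_def zeroS_def)
qed

lemma geoT_mulS_wd_Nil: "mulS (geoT k) (cstS (wd [])) = geoT k"
  unfolding fun_eq_iff geoT_mulS_wd by (simp add: geoT_def)

lemma geoS_mulS_wd_Nil: "mulS (geoS k) (cstS (wd [])) = geoS k"
  unfolding fun_eq_iff geoS_mulS_wd by (simp add: geoS_def)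

lemma right_deriv_geoT_mulS_wd_snoc:
  "right_deriv x (mulS (geoT k) (cstS (wd (u @ [y])))) =
     (if x = y then mulS (geoT k) (cstS (wd u)) else zeroS)"
  by (auto simp: fun_eq_iff right_deriv_def geoT_mulS_wd zeroS_def)

lemma right_deriv_geoS_mulS_wd_snoc:
  "right_deriv x (mulS (geoS k) (cstS (wd (u @ [y])))) =
     (if x = y then mulS (geoS k) (cstS (wd u)) else zeroS)"
  by (auto simp: fun_eq_iff right_deriv_def geoS_mulS_wd zeroS_def)

lemma right_deriv_geoS_mulS_wd_mulS_geoT:
  "right_deriv x (mulS (mulS (geoS c) (cstS (wd (u @ [1])))) (geoT d)) =
     (if x = 0 then mult_t d (mulS (mulS (geoS c) (cstS (wd (u @ [1])))) (geoT d))
      else if x = 1 then mulS (geoS c) (cstS (wd u)) else zeroS)"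
proof -
  have "mulS (mulS (geoS c) (cstS (wd (u @ [1])))) (geoT d) m n (w @ [x]) =
      (if x = 0 then mult_t d (mulS (mulS (geoS c) (cstS (wd (u @ [1])))) (geoT d)) m n w
       else if x = 1 then mulS (geoS c) (cstS (wd u)) m n w else 0)" for m n w
    using snoc_eq_append_replicate_Suc[of w x "replicate m 0 @ u @ [1]" "n - 1" 0]
    by (cases n) (auto simp: geoS_mulS_wd_mulS_geoT geoS_mulS_wd mult_t_def)
  then show ?thesis by (auto simp: fun_eq_iff right_deriv_def zeroS_def)
qed

lemma right_deriv_geoT_mulS_wd_mulS_geoS:
  "right_deriv x (mulS (mulS (geoT c) (cstS (wd (u @ [1])))) (geoS d)) =
     (if x = 0 then mult_s d (mulS (mulS (geoT c) (cstS (wd (u @ [1])))) (geoS d))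
      else if x = 1 then mulS (geoT c) (cstS (wd u)) else zeroS)"
proof -
  have "mulS (mulS (geoT c) (cstS (wd (u @ [1])))) (geoS d) m n (w @ [x]) =
      (if x = 0 then mult_s d (mulS (mulS (geoT c) (cstS (wd (u @ [1])))) (geoS d)) m n w
       else if x = 1 then mulS (geoT c) (cstS (wd u)) m n w else 0)" for m n w
    using snoc_eq_append_replicate_Suc[of w x "replicate n 0 @ u @ [1]" "m - 1" 0]
    by (cases m) (auto simp: geoT_mulS_wd_mulS_geoS geoT_mulS_wd mult_s_def)
  then show ?thesis by (auto simp: fun_eq_iff right_deriv_def zeroS_def)
qed

lemma shS_geoT_mulS_wd_mulS_geoT_snoc:
  "shS (geoT (-d)) (mulS (mulS (geoS c) (cstS (wd (u @ [1])))) (geoT d)) m n (w @ [x]) =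
     (if x = 1 then shS (geoT (-d)) (mulS (geoS c) (cstS (wd u))) m n w else 0)"
  unfolding shS_snoc right_deriv_geoT right_deriv_geoS_mulS_wd_mulS_geoT
  by (cases "x = 0"; cases "x = 1") (simp_all add: shS_mult_t_left shS_mult_t_right, simp_all add: mult_t_def zeroS_def)

lemma shS_geoS_mulS_wd_mulS_geoS_snoc:
  "shS (geoS (-d)) (mulS (mulS (geoT c) (cstS (wd (u @ [1])))) (geoS d)) m n (w @ [x]) =
     (if x = 1 then shS (geoS (-d)) (mulS (geoT c) (cstS (wd u))) m n w else 0)"
  unfolding shS_snoc right_deriv_geoS right_deriv_geoT_mulS_wd_mulS_geoS
  by (cases "x = 0"; cases "x = 1") (simp_all add: shS_mult_s_left shS_mult_s_right, simp_all add: mult_s_def zeroS_def)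

section \<open>The telescoping sum\<close>

lemma alternating_sum_shS_snoc:
  fixes P Q :: "nat \<Rightarrow> hser"
  assumes link: "\<And>i. i < N \<Longrightarrow>
    shS (right_deriv c (P (Suc i))) (Q (Suc i)) = shS (P i) (right_deriv c (Q i))"
  shows "(\<Sum>v\<le>N. (-1) ^ v * shS (P v) (Q v) m n (w @ [c])) =
    shS (right_deriv c (P 0)) (Q 0) m n w + (-1) ^ N * shS (P N) (right_deriv c (Q N)) m n w"
proof -
  define L where "L v = shS (right_deriv c (P v)) (Q v) m n w" for v
  define R where "R v = shS (P v) (right_deriv c (Q v)) m n w" for v
  have "(\<Sum>v\<le>N. (-1) ^ v * shS (P v) (Q v) m n (w @ [c])) =
      (\<Sum>v\<le>N. (-1) ^ v * L v) + (\<Sum>v\<le>N. (-1) ^ v * R v)"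
    by (simp add: shS_snoc L_def R_def distrib_left sum.distrib)
  also have "(\<Sum>v\<le>N. (-1) ^ v * L v) = L 0 - (\<Sum>i<N. (-1) ^ i * R i)"
    using link by (simp add: sum.atMost_shift L_def R_def sum_negf[symmetric])
  also have "(\<Sum>v\<le>N. (-1) ^ v * R v) = (\<Sum>i<N. (-1) ^ i * R i) + (-1) ^ N * R N"
    by (simp add: lessThan_Suc_atMost[symmetric])
  finally show ?thesis
    by (simp add: L_def R_def)
qed

lemma alternating_sum_shS_prefix_suffix_snoc:
  "(\<Sum>v\<le>length a. (-1) ^ v *
      shS (mulS (geoT k) (cstS (wd (b # take v a)))) (mulS (geoS l) (cstS (wd (b # rev (drop v a)))))
        m n (w @ [c])) =
   (if c = b then shS (geoT k) (mulS (geoS l) (cstS (wd (b # rev a)))) m n w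
      + (-1) ^ length a * shS (mulS (geoT k) (cstS (wd (b # a)))) (geoS l) m n w
    else 0)"
proof -
  let ?P = "\<lambda>v. mulS (geoT k) (cstS (wd (b # take v a)))"
  let ?Q = "\<lambda>v. mulS (geoS l) (cstS (wd (b # rev (drop v a))))"
  have "shS (right_deriv c (?P (Suc i))) (?Q (Suc i)) = shS (?P i) (right_deriv c (?Q i))"
    if "i < length a" for i
  proof -
    have "b # take (Suc i) a = (b # take i a) @ [a ! i]"
      using that by (simp add: take_Suc_conv_app_nth)
    moreover have "b # rev (drop i a) = (b # rev (drop (Suc i) a)) @ [a ! i]"
      using that by (metis Cons_nth_drop_Suc rev.simps(2) append_Cons)
    ultimately show ?thesis
      by (simp only: right_deriv_geoT_mulS_wd_snoc right_deriv_geoS_mulS_wd_snoc) simp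
  qed
  then have "(\<Sum>v\<le>length a. (-1) ^ v * shS (?P v) (?Q v) m n (w @ [c])) =
      shS (right_deriv c (?P 0)) (?Q 0) m n w + (-1) ^ length a * shS (?P (length a)) (right_deriv c (?Q (length a))) m n w"
    by (rule alternating_sum_shS_snoc)
  also have "\<dots> = (if c = b then shS (geoT k) (?Q 0) m n w
      + (-1) ^ length a * shS (?P (length a)) (geoS l) m n w else 0)"
    using right_deriv_geoT_mulS_wd_snoc[of c k "[]" b] right_deriv_geoS_mulS_wd_snoc[of c l "[]" b]
    by (simp add: geoT_mulS_wd_Nil geoS_mulS_wd_Nil)
  finally show ?thesis by simp
qed

theorem mainTheorem18:
  fixes a :: "nat list"
  assumes "set a \<subseteq> {0, 1}"
  defines "N \<equiv> length a"
  shows "(\<lambda>m n w. \<Sum>v\<le>N. (-1) ^ v *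
            shS (mulS (geoT (-1)) (cstS (wd (1 # take v a))))
                (mulS (geoS 1) (cstS (wd (1 # rev (drop v a))))) m n w)
       = (\<lambda>m n w.
            shS (geoT (-1))
                (mulS (mulS (geoS 1) (cstS (wd (1 # rev a @ [1])))) (geoT 1)) m n w
          + (-1) ^ N *
            shS (geoS 1)
                (mulS (mulS (geoT (-1)) (cstS (wd (1 # a @ [1])))) (geoS (-1))) m n w)"
proof (rule ext, rule ext, rule ext, goal_cases)
  case (1 m n w)
  show ?case
  proof (cases w rule: rev_cases)
    case Nil
    then show ?thesis
      by (simp add: shS_Nil geoT_mulS_wd geoS_mulS_wd geoS_mulS_wd_mulS_geoT geoT_mulS_wd_mulS_geoS)
  next
    case (snoc w' c)
    then show ?thesis
      using shS_geoT_mulS_wd_mulS_geoT_snoc[of 1 1 "1 # rev a"]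
        shS_geoS_mulS_wd_mulS_geoS_snoc[of "-1" "-1" "1 # a"]
      by (simp add: N_def alternating_sum_shS_prefix_suffix_snoc shS_commute[of "geoS 1"])
  qed
qed

end
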